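(* Let $\mathcal D\subset\mathbb{R}^d$ be a linear subspace with orthonormal basis given by the columns of $\mathbf V$, so that $\mathbf P=\mathbf V\mathbf V^T$ is the orthogonal projection onto $\mathcal D$. Let $\boldsymbol\theta\in\mathbb{R}^{d\times d}$ be invertible and let $\hat{\mathbf P}$ be the orthogonal projection onto $\boldsymbol\theta\mathcal D=\{\boldsymbol\theta\mathbf x:\mathbf x\in\mathcal D\}$. Then $$\|\boldsymbol\theta^{-1}\hat{\mathbf P}\boldsymbol\theta-\mathbf P\|_2\le\big(1+\kappa(\boldsymbol\theta)^2\big)\,\|\mathbf I-\boldsymbol\theta^T\boldsymbol\theta\|_2.$$
   Context: $\|\cdot\|_2$ denotes the spectral (operator 2-) norm and $\kappa(\boldsymbol\theta)=\|\boldsymbol\theta\|_2\|\boldsymbol\theta^{-1}\|_2$ the condition number. *)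

theory Defs
  imports "HOL-Analysis.Analysis"
begin

definition spec_norm :: "real^'n^'m \<Rightarrow> real" where
  "spec_norm A = onorm (\<lambda>x. A *v x)"

definition cond_num :: "real^'n^'n \<Rightarrow> real" where
  "cond_num A = spec_norm A * spec_norm (matrix_inv A)"

definition is_orth_proj :: "real^'n^'n \<Rightarrow> (real^'n) set \<Rightarrow> bool" where
  "is_orth_proj P S \<longleftrightarrow> (\<forall>x. P *v x \<in> S \<and> (\<forall>y\<in>S. orthogonal (x - P *v x) y))"

end

theory Submission
  imports Defs
begin

text \<open>Write \<open>Q = \<theta>\<^sup>-\<^sup>1 Phat \<theta>\<close>, \<open>E = I - \<theta>\<^sup>T\<theta>\<close>, and for a vector \<open>x\<close> put \<open>w = x - Px\<close> and
  \<open>u = Qx - Px\<close>. Since \<open>Phat\<close> fixes \<open>\<theta>Px\<close>, \<open>u = \<theta>\<^sup>-\<^sup>1Phat\<theta>w\<close>; this gives \<open>|u| \<le> \<kappa>|x|\<close>, and shows that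
  \<open>u \<in> D\<close> (so \<open>u \<perp> w\<close>) with \<open>\<theta>u\<close> the orthogonal projection of \<open>\<theta>w\<close> onto \<open>\<theta>D\<close>. Hence
  \<open>|\<theta>u|\<^sup>2 = \<langle>w, \<theta>\<^sup>T\<theta>u\<rangle> = -\<langle>w, Eu\<rangle>\<close> and \<open>|u|\<^sup>2 = \<langle>u, Eu\<rangle> + |\<theta>u|\<^sup>2 \<le> \<epsilon>|u|\<^sup>2 + \<epsilon>|w||u|\<close> with
  \<open>\<epsilon> = \<parallel>E\<parallel>\<close>. For \<open>\<epsilon> < 1/2\<close> this yields \<open>|u| \<le> 2\<epsilon>|x|\<close>; otherwise the crude bound
  \<open>\<kappa>|x| \<le> (1 + \<kappa>\<^sup>2)/2 |x|\<close> already suffices.\<close>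

lemma real_quadratic_self_bound:
  fixes u w x e k :: real
  assumes quad: "u\<^sup>2 \<le> e * u\<^sup>2 + e * w * u"
    and "0 \<le> u" "0 \<le> w" "w \<le> x" "u \<le> k * x" "1 \<le> k" "0 \<le> e"
  shows "u \<le> (1 + k\<^sup>2) * e * x"
proof (cases "e < 1/2")
  case True
  have "u \<le> 2 * e * x"
  proof (cases "u = 0")
    case False
    have "u * u \<le> (e * u + e * w) * u"
      using quad by (simp add: power2_eq_square algebra_simps)
    with False \<open>0 \<le> u\<close> have "u \<le> e * u + e * w" by simp
    moreover have "e * w \<le> e * x" using assms by (simp add: mult_left_mono)
    moreover have "e * u \<le> (1/2) * u" using True \<open>0 \<le> u\<close> by (intro mult_right_mono) auto
    ultimately show ?thesis by linarith
  qed (use assms in simp)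
  also have "\<dots> \<le> (1 + k\<^sup>2) * e * x"
    using assms by (intro mult_right_mono) (auto simp: one_le_power)
  finally show ?thesis .
next
  case False
  have "k \<le> (1 + k\<^sup>2) * (1/2)"
    using sum_power2_ge_zero[of "k - 1" 0] by (simp add: power2_eq_square algebra_simps)
  also have "\<dots> \<le> (1 + k\<^sup>2) * e"
    using False by (intro mult_left_mono) (auto intro: add_nonneg_nonneg)
  finally show ?thesis
    using assms by (meson le_trans mult_right_mono order.trans)
qed

lemma spec_norm_bound: "norm (A *v x) \<le> spec_norm A * norm x"
  for A :: "real^'n^'m"
  unfolding spec_norm_def by (rule onorm) (simp add: linear_conv_bounded_linear)

lemma spec_norm_nonneg: "0 \<le> spec_norm A"
  for A :: "real^'n^'m"
  unfolding spec_norm_def by (rule onorm_pos_le) (simp add: linear_conv_bounded_linear)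

lemma spec_norm_le: "(\<And>x. norm (A *v x) \<le> b * norm x) \<Longrightarrow> spec_norm A \<le> b"
  for A :: "real^'n^'m"
  unfolding spec_norm_def by (rule onorm_le) auto

lemma invertible_matrix_inv:
  fixes A :: "real^'n^'n"
  assumes "invertible A"
  shows "A ** matrix_inv A = mat 1" and "matrix_inv A ** A = mat 1"
  using assms unfolding matrix_inv_def invertible_def by (metis (mono_tags, lifting) someI_ex)+

lemma matrix_inv_vector_cancel:
  fixes A :: "real^'n^'n"
  assumes "invertible A"
  shows "matrix_inv A *v (A *v x) = x" and "A *v (matrix_inv A *v x) = x"
  by (simp_all add: matrix_vector_mul_assoc invertible_matrix_inv[OF assms])

lemma cond_num_ge_1:
  fixes A :: "real^'n^'n"
  assumes "invertible A"
  shows "1 \<le> cond_num A"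
proof -
  define v :: "real^'n" where "v = vec 1"
  have "v \<noteq> 0" by (simp add: v_def vec_eq_iff)
  have "norm v = norm (matrix_inv A *v (A *v v))"
    by (simp add: matrix_inv_vector_cancel[OF assms])
  also have "\<dots> \<le> spec_norm (matrix_inv A) * norm (A *v v)" by (rule spec_norm_bound)
  also have "\<dots> \<le> spec_norm (matrix_inv A) * (spec_norm A * norm v)"
    by (intro mult_left_mono spec_norm_bound spec_norm_nonneg)
  finally have "1 * norm v \<le> cond_num A * norm v" by (simp add: cond_num_def ac_simps)
  with \<open>v \<noteq> 0\<close> show ?thesis by simp
qed

lemma inner_matrix_vector_mult_Gram: "(A *v x) \<bullet> (A *v y) = x \<bullet> ((transpose A ** A) *v y)"
  for A :: "real^'n^'m"
proof -
  have "x \<bullet> ((transpose A ** A) *v y) = ((A *v y) v* A) \<bullet> x"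
    by (simp add: matrix_vector_mul_assoc[symmetric] inner_commute)
  also have "\<dots> = (A *v y) \<bullet> (A *v x)" by (rule dot_lmul_matrix)
  finally show ?thesis by (simp add: inner_commute)
qed

lemma is_orth_proj_orthonormal_columns:
  fixes V :: "real^'k^'n"
  assumes orthonormal: "\<And>i j. column i V \<bullet> column j V = (if i = j then 1 else 0)"
  shows "is_orth_proj (V ** transpose V) (span (columns V))"
  unfolding is_orth_proj_def
proof (intro allI conjI ballI)
  fix x :: "real^'n"
  have "V *v z = (\<Sum>i\<in>UNIV. z$i *\<^sub>R column i V)" for z :: "real^'k"
    by (simp add: matrix_vector_column scalar_mult_eq_scaleR) (simp add: transpose_def column_def)
  then show "(V ** transpose V) *v x \<in> span (columns V)"
    by (simp add: matrix_vector_mul_assoc[symmetric])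
       (intro span_sum span_mul span_base, auto simp: columns_def)
  have "transpose V ** V = mat 1"
    by (simp add: matrix_mult_transpose_dot_column orthonormal vec_eq_iff mat_def)
  then have "transpose V *v (x - (V ** transpose V) *v x) = 0"
    by (simp add: matrix_vector_mult_diff_distrib matrix_vector_mul_assoc matrix_mul_assoc)
  moreover have "(transpose V *v z) $ j = column j V \<bullet> z" for z and j
    by (simp add: matrix_vector_mul_component transpose_def column_def inner_vec_def inner_commute)
  ultimately have residual_orth_columns: "column j V \<bullet> (x - (V ** transpose V) *v x) = 0" for j
    by (metis zero_index)
  fix y assume "y \<in> span (columns V)"
  then show "orthogonal (x - (V ** transpose V) *v x) y"
    by (rule orthogonal_to_span)
       (auto simp: columns_def orthogonal_def inner_commute residual_orth_columns)
qed

lemma is_orth_proj_Pythagoras: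
  assumes "is_orth_proj P S"
  shows "(norm x)\<^sup>2 = (norm (x - P *v x))\<^sup>2 + (norm (P *v x))\<^sup>2"
  using assms norm_add_Pythagorean[of "x - P *v x" "P *v x"] unfolding is_orth_proj_def by simp

lemma is_orth_proj_norm_le: "is_orth_proj P S \<Longrightarrow> norm (P *v x) \<le> norm x"
  by (metis is_orth_proj_Pythagoras le_add_same_cancel2 norm_ge_zero power2_le_imp_le zero_le_power2)

lemma is_orth_proj_residual_norm_le: "is_orth_proj P S \<Longrightarrow> norm (x - P *v x) \<le> norm x"
  by (metis is_orth_proj_Pythagoras le_add_same_cancel1 norm_ge_zero power2_le_imp_le zero_le_power2)

lemma is_orth_proj_fixes:
  assumes "subspace S" "is_orth_proj P S" "y \<in> S"
  shows "P *v y = y"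
proof -
  have "y - P *v y \<in> S" using assms by (simp add: subspace_diff is_orth_proj_def)
  then have "orthogonal (y - P *v y) (y - P *v y)" using assms(2) by (simp add: is_orth_proj_def)
  then show ?thesis by (simp add: orthogonal_def)
qed

context
  fixes D :: "(real^'n) set" and P Phat \<theta> :: "real^'n^'n"
  assumes subspace_D: "subspace D" and P_proj: "is_orth_proj P D"
    and \<theta>_invertible: "invertible \<theta>" and Phat_proj: "is_orth_proj Phat ((\<lambda>x. \<theta> *v x) ` D)"
begin

lemma conj_proj_in_subspace: "matrix_inv \<theta> *v (Phat *v (\<theta> *v x)) \<in> D"
proof -
  obtain d where "d \<in> D" "Phat *v (\<theta> *v x) = \<theta> *v d"
    using Phat_proj unfolding is_orth_proj_def by blast
  then show ?thesis
    by (simp add: matrix_inv_vector_cancel[OF \<theta>_invertible])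
qed

lemma conj_proj_diff_eq:
  "(matrix_inv \<theta> ** Phat ** \<theta> - P) *v x = matrix_inv \<theta> *v (Phat *v (\<theta> *v (x - P *v x)))"
proof -
  have "subspace ((\<lambda>x. \<theta> *v x) ` D)"
    by (rule linear_subspace_image[OF _ subspace_D]) simp
  moreover have "\<theta> *v (P *v x) \<in> (\<lambda>x. \<theta> *v x) ` D"
    using P_proj unfolding is_orth_proj_def by blast
  ultimately have "Phat *v (\<theta> *v (P *v x)) = \<theta> *v (P *v x)"
    using is_orth_proj_fixes[OF _ Phat_proj] by blast
  then show ?thesis
    by (simp add: matrix_vector_mult_diff_distrib matrix_vector_mult_diff_rdistrib
        matrix_vector_mul_assoc[symmetric] matrix_inv_vector_cancel[OF \<theta>_invertible])
qed

lemma conj_proj_diff_le_cond: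
  "norm ((matrix_inv \<theta> ** Phat ** \<theta> - P) *v x) \<le> cond_num \<theta> * norm x"
proof -
  let ?w = "x - P *v x"
  have "norm (matrix_inv \<theta> *v (Phat *v (\<theta> *v ?w)))
      \<le> spec_norm (matrix_inv \<theta>) * norm (Phat *v (\<theta> *v ?w))"
    by (rule spec_norm_bound)
  also have "\<dots> \<le> spec_norm (matrix_inv \<theta>) * norm (\<theta> *v ?w)"
    by (intro mult_left_mono spec_norm_nonneg is_orth_proj_norm_le[OF Phat_proj])
  also have "\<dots> \<le> spec_norm (matrix_inv \<theta>) * (spec_norm \<theta> * norm ?w)"
    by (intro mult_left_mono spec_norm_nonneg spec_norm_bound)
  also have "\<dots> \<le> spec_norm (matrix_inv \<theta>) * (spec_norm \<theta> * norm x)"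
    by (intro mult_left_mono spec_norm_nonneg is_orth_proj_residual_norm_le[OF P_proj])
  finally show ?thesis by (simp add: conj_proj_diff_eq cond_num_def ac_simps)
qed

lemma conj_proj_diff_quadratic:
  fixes x :: "real^'n"
  defines "u \<equiv> (matrix_inv \<theta> ** Phat ** \<theta> - P) *v x"
    and "e \<equiv> spec_norm (mat 1 - transpose \<theta> ** \<theta>)"
  shows "(norm u)\<^sup>2 \<le> e * (norm u)\<^sup>2 + e * norm (x - P *v x) * norm u"
proof -
  define w where "w = x - P *v x"
  define E where "E = mat 1 - transpose \<theta> ** \<theta>"
  have Gram: "transpose \<theta> ** \<theta> *v v = v - E *v v" for v
    by (simp add: E_def matrix_vector_mult_diff_rdistrib)
  have "u \<in> D"
    unfolding u_def using subspace_D conj_proj_in_subspace P_proj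
    by (simp add: matrix_vector_mult_diff_rdistrib matrix_vector_mul_assoc[symmetric]
        subspace_diff is_orth_proj_def)
  then have "w \<bullet> u = 0"
    using P_proj by (simp add: w_def is_orth_proj_def orthogonal_def)
  have "\<theta> *v w - \<theta> *v u = \<theta> *v x - Phat *v (\<theta> *v x)"
    by (simp add: u_def w_def matrix_vector_mult_diff_distrib matrix_vector_mult_diff_rdistrib
        matrix_vector_mul_assoc[symmetric] matrix_inv_vector_cancel[OF \<theta>_invertible])
  then have "(\<theta> *v w - \<theta> *v u) \<bullet> (\<theta> *v u) = 0"
    using Phat_proj \<open>u \<in> D\<close> by (simp add: is_orth_proj_def orthogonal_def)
  then have "(\<theta> *v u) \<bullet> (\<theta> *v u) = - (w \<bullet> (E *v u))"
    using \<open>w \<bullet> u = 0\<close> by (simp add: inner_diff_left inner_matrix_vector_mult_Gram Gram inner_diff_right)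
  moreover have "u \<bullet> u = u \<bullet> (E *v u) + (\<theta> *v u) \<bullet> (\<theta> *v u)"
    by (simp add: inner_matrix_vector_mult_Gram Gram inner_diff_right)
  moreover have "u \<bullet> (E *v u) \<le> norm u * (e * norm u)"
    using norm_cauchy_schwarz[of u "E *v u"] mult_left_mono[OF spec_norm_bound norm_ge_zero]
    unfolding e_def E_def by (meson order.trans)
  moreover have "- (w \<bullet> (E *v u)) \<le> norm w * (e * norm u)"
    using Cauchy_Schwarz_ineq2[of w "E *v u"] mult_left_mono[OF spec_norm_bound norm_ge_zero]
    unfolding e_def E_def by (smt (verit))
  ultimately show ?thesis
    by (simp add: w_def power2_norm_eq_inner[symmetric] power2_eq_square algebra_simps)
qed

lemma conj_proj_diff_bound:
  "norm ((matrix_inv \<theta> ** Phat ** \<theta> - P) *v x)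
     \<le> (1 + (cond_num \<theta>)\<^sup>2) * spec_norm (mat 1 - transpose \<theta> ** \<theta>) * norm x"
  by (intro real_quadratic_self_bound[OF conj_proj_diff_quadratic] conj_proj_diff_le_cond
      cond_num_ge_1 \<theta>_invertible spec_norm_nonneg norm_ge_zero
      is_orth_proj_residual_norm_le[OF P_proj])

end

theorem mainTheorem6:
  fixes D :: "(real^'n) set" and V :: "real^'k^'n" and P Phat \<theta> :: "real^'n^'n"
  assumes "subspace D"
    and "\<And>i j. column i V \<bullet> column j V = (if i = j then 1 else 0)"
    and "span (columns V) = D"
    and "P = V ** transpose V"
    and "invertible \<theta>"
    and "is_orth_proj Phat ((\<lambda>x. \<theta> *v x) ` D)"
  shows "spec_norm (matrix_inv \<theta> ** Phat ** \<theta> - P)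
           \<le> (1 + (cond_num \<theta>)\<^sup>2) * spec_norm (mat 1 - transpose \<theta> ** \<theta>)"
proof (rule spec_norm_le)
  have "is_orth_proj P D"
    using is_orth_proj_orthonormal_columns[OF assms(2)] assms(3,4) by simp
  then show "norm ((matrix_inv \<theta> ** Phat ** \<theta> - P) *v x)
      \<le> (1 + (cond_num \<theta>)\<^sup>2) * spec_norm (mat 1 - transpose \<theta> ** \<theta>) * norm x" for x
    using conj_proj_diff_bound assms(1,5,6) by blast
qed

end
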